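(* Let $M$ be a matroid, let $S,T$ be disjoint subsets of $E(M)$, let $k:=\kappa_M(S,T)$, and let $(A_1,\dots,A_t)$ be a sequence of sets with $A_1\subseteq A_2\subseteq\dots\subseteq A_t$, $S\subseteq A_i\subseteq E(M)-T$ and $\lambda_M(A_i)=k$ for all $i$; put $B_i:=E(M)-A_i$. Let $(C,D)$ be a partition of $E(M)-(S\cup T)$ such that $C$ is independent, $D$ is coindependent, and $\lambda_{M/C\setminus D}(S)=k$. Let $i,j\in\{1,\dots,t\}$ with $i<j$, let $C':=C\cap(A_j-A_i)$, $D':=D\cap(A_j-A_i)$, and $M':=M/C'\setminus D'$. Then $(A_i,B_j)$ is a partition of $E(M')$ with $S\subseteq A_i$, $T\subseteq B_j$ and $\lambda_{M'}(A_i)=k$. Moreover, $M'|A_i=M|A_i$ and $M'|B_j=M|B_j$.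
   Context: For a matroid $M$ with ground set $E$, $\lambda_M(X):=r_M(X)+r_M(E-X)-r(M)$, and for disjoint $S,T\subseteq E$, $\kappa_M(S,T):=\min\{\lambda_M(X):S\subseteq X\subseteq E-T\}$. $M|X$ denotes the restriction of $M$ to $X$. *)

theory Defs
  imports Main
begin

type_synonym 'a matroid = "'a set \<times> ('a set \<Rightarrow> bool)"

definition ground :: "'a matroid \<Rightarrow> 'a set" where
  "ground M = fst M"

definition indep :: "'a matroid \<Rightarrow> 'a set \<Rightarrow> bool" where
  "indep M X = snd M X"

definition matroid :: "'a matroid \<Rightarrow> bool" where
  "matroid M \<longleftrightarrow>
     finite (ground M) \<and>
     indep M {} \<and>
     (\<forall>X. indep M X \<longrightarrow> X \<subseteq> ground M) \<and>
     (\<forall>X Y. indep M Y \<and> X \<subseteq> Y \<longrightarrow> indep M X) \<and>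
     (\<forall>X Y. indep M X \<and> indep M Y \<and> card X < card Y \<longrightarrow>
        (\<exists>e\<in>Y - X. indep M (insert e X)))"

definition rank :: "'a matroid \<Rightarrow> 'a set \<Rightarrow> nat" where
  "rank M X = Max (card ` {Y. Y \<subseteq> X \<and> indep M Y})"

definition basis :: "'a matroid \<Rightarrow> 'a set \<Rightarrow> bool" where
  "basis M B \<longleftrightarrow> indep M B \<and> (\<forall>Y. indep M Y \<and> B \<subseteq> Y \<longrightarrow> Y = B)"

definition dual :: "'a matroid \<Rightarrow> 'a matroid" where
  "dual M = (ground M, \<lambda>X. X \<subseteq> ground M \<and> (\<exists>B. basis M B \<and> B \<inter> X = {}))"

definition coindep :: "'a matroid \<Rightarrow> 'a set \<Rightarrow> bool" where
  "coindep M X \<longleftrightarrow> indep (dual M) X"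

definition conn :: "'a matroid \<Rightarrow> 'a set \<Rightarrow> nat" where
  "conn M X = rank M X + rank M (ground M - X) - rank M (ground M)"

definition kappa :: "'a matroid \<Rightarrow> 'a set \<Rightarrow> 'a set \<Rightarrow> nat" where
  "kappa M S T = Min {conn M X | X. S \<subseteq> X \<and> X \<subseteq> ground M - T}"

definition deletion :: "'a matroid \<Rightarrow> 'a set \<Rightarrow> 'a matroid" where
  "deletion M D = (ground M - D, \<lambda>X. indep M X \<and> X \<subseteq> ground M - D)"

definition contraction :: "'a matroid \<Rightarrow> 'a set \<Rightarrow> 'a matroid" where
  "contraction M C = (ground M - C,
     \<lambda>X. X \<subseteq> ground M - C \<and> rank M (X \<union> C) = card X + rank M C)"

definition restriction :: "'a matroid \<Rightarrow> 'a set \<Rightarrow> 'a matroid" where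
  "restriction M X = deletion M (ground M - X)"

definition minor :: "'a matroid \<Rightarrow> 'a set \<Rightarrow> 'a set \<Rightarrow> 'a matroid" where
  "minor M C D = deletion (contraction M C) D"

end

theory Submission
  imports Defs
begin

text \<open>
  Write \<lambda>[C,D](X) for the connectivity of X in M/C\D. Undoing a contraction or a deletion
  never decreases it, whether the restored elements are put outside X or into X; each case is one
  application of submodularity of the rank. With C' and D' as in the statement this gives
  k = \<lambda>[C,D](S) \<le> \<lambda>[C',D'](A_i) \<le> \<lambda>[C',\<emptyset>](A_i) \<le> \<lambda>[\<emptyset>,\<emptyset>](A_i) = k and
  \<lambda>[C',D'](A_i) \<le> \<lambda>[C',\<emptyset>](A_i \<union> D') \<le> \<lambda>[\<emptyset>,\<emptyset>](A_j) = k, so all these values equal k.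
  Unfolding the rank formula, the two equalities involving \<lambda>[C',\<emptyset>] say that C' is skew to
  A_i and to B_j, and contracting a set skew to P while deleting elements outside P leaves M|P
  unchanged.
\<close>

lemma finite_ground: "matroid M \<Longrightarrow> finite (ground M)"
  by (simp add: matroid_def)

lemma indep_empty: "matroid M \<Longrightarrow> indep M {}"
  by (simp add: matroid_def)

lemma indep_subset_ground: "matroid M \<Longrightarrow> indep M X \<Longrightarrow> X \<subseteq> ground M"
  by (simp add: matroid_def)

lemma indep_subset: "matroid M \<Longrightarrow> indep M Y \<Longrightarrow> X \<subseteq> Y \<Longrightarrow> indep M X"
  unfolding matroid_def by blast

lemma indep_augment:
  "matroid M \<Longrightarrow> indep M X \<Longrightarrow> indep M Y \<Longrightarrow> card X < card Y \<Longrightarrow> \<exists>e\<in>Y - X. indep M (insert e X)"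
  unfolding matroid_def by blast

lemma finite_indep: "matroid M \<Longrightarrow> indep M X \<Longrightarrow> finite X"
  using indep_subset_ground finite_ground finite_subset by blast

subsection \<open>Rank\<close>

lemma finite_indep_subsets: "matroid M \<Longrightarrow> finite {Y. Y \<subseteq> X \<and> indep M Y}"
  by (rule finite_subset[of _ "Pow (ground M)"]) (auto dest: indep_subset_ground simp: finite_ground)

lemma card_le_rank: "matroid M \<Longrightarrow> Y \<subseteq> X \<Longrightarrow> indep M Y \<Longrightarrow> card Y \<le> rank M X"
  unfolding rank_def by (rule Max_ge) (auto simp: finite_indep_subsets)

lemma obtain_rank_witness:
  assumes "matroid M"
  obtains Y where "Y \<subseteq> X" "indep M Y" "card Y = rank M X"
proof -
  have "rank M X \<in> card ` {Y. Y \<subseteq> X \<and> indep M Y}"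
    unfolding rank_def
    by (rule Max_in) (use finite_indep_subsets[OF assms] indep_empty[OF assms] in auto)
  then obtain Y where "Y \<subseteq> X" "indep M Y" "card Y = rank M X" by auto
  then show ?thesis by (rule that)
qed

lemma rank_mono: "matroid M \<Longrightarrow> X \<subseteq> Y \<Longrightarrow> rank M X \<le> rank M Y"
proof -
  assume M: "matroid M" and "X \<subseteq> Y"
  obtain Z where "Z \<subseteq> X" "indep M Z" "card Z = rank M X" using obtain_rank_witness[OF M] .
  with \<open>X \<subseteq> Y\<close> show ?thesis using card_le_rank[OF M, of Z Y] by simp
qed

lemma rank_le_card: "matroid M \<Longrightarrow> finite X \<Longrightarrow> rank M X \<le> card X"
proof -
  assume M: "matroid M" and fin: "finite X"
  obtain Z where Z: "Z \<subseteq> X" "indep M Z" "card Z = rank M X" using obtain_rank_witness[OF M] .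
  then show ?thesis using card_mono[OF fin Z(1)] by simp
qed

lemma rank_empty: "matroid M \<Longrightarrow> rank M {} = 0"
  using rank_le_card[of M "{}"] by simp

lemma rank_indep: "matroid M \<Longrightarrow> indep M X \<Longrightarrow> rank M X = card X"
  using card_le_rank[of M X X] rank_le_card[of M X] finite_indep[of M X] by simp

lemma indep_iff_rank_eq_card:
  assumes M: "matroid M" and fin: "finite X"
  shows "indep M X \<longleftrightarrow> rank M X = card X"
proof
  assume "indep M X"
  then show "rank M X = card X" by (rule rank_indep[OF M])
next
  assume rank_eq: "rank M X = card X"
  obtain Z where Z: "Z \<subseteq> X" "indep M Z" "card Z = rank M X" using obtain_rank_witness[OF M] .
  then have "Z = X" using card_subset_eq[OF fin Z(1)] rank_eq by simp
  with Z show "indep M X" by simp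
qed

lemma extend_indep_to_rank:
  assumes M: "matroid M" and "indep M I" and "I \<subseteq> Z"
  obtains J where "I \<subseteq> J" "J \<subseteq> Z" "indep M J" "card J = rank M Z"
  using assms(2,3)
proof (induction "rank M Z - card I" arbitrary: I rule: less_induct)
  case less
  show ?case
  proof (cases "card I < rank M Z")
    case True
    obtain K where K: "K \<subseteq> Z" "indep M K" "card K = rank M Z"
      using obtain_rank_witness[OF M] .
    then obtain e where e: "e \<in> K - I" "indep M (insert e I)"
      using indep_augment[OF M less.prems(2) K(2)] True by auto
    have "rank M Z - card (insert e I) < rank M Z - card I"
      using True e(1) finite_indep[OF M less.prems(2)] by simp
    then show ?thesis
      by (rule less.hyps) (use less.prems e K(1) in blast)+
  next
    case False
    then have "card I = rank M Z" using card_le_rank[OF M less.prems(3,2)] by simp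
    then show ?thesis using less.prems by blast
  qed
qed

lemma rank_submod: "matroid M \<Longrightarrow> rank M (X \<union> Y) + rank M (X \<inter> Y) \<le> rank M X + rank M Y"
proof -
  assume M: "matroid M"
  obtain I where I: "I \<subseteq> X \<inter> Y" "indep M I" "card I = rank M (X \<inter> Y)"
    using obtain_rank_witness[OF M] .
  obtain J where J: "I \<subseteq> J" "J \<subseteq> X \<union> Y" "indep M J" "card J = rank M (X \<union> Y)"
    using extend_indep_to_rank[OF M I(2), of "X \<union> Y"] I(1) by blast
  have fin: "finite J" using finite_indep[OF M J(3)] .
  have "card J + card I \<le> card (J \<inter> X) + card (J \<inter> Y)"
  proof -
    have "card (J \<inter> X) + card (J \<inter> Y) = card ((J \<inter> X) \<union> (J \<inter> Y)) + card ((J \<inter> X) \<inter> (J \<inter> Y))"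
      by (rule card_Un_Int) (use fin in auto)
    moreover have "card ((J \<inter> X) \<union> (J \<inter> Y)) = card J"
      using J(2) by (intro arg_cong[where f = card]) blast
    moreover have "card I \<le> card ((J \<inter> X) \<inter> (J \<inter> Y))" using I J fin by (intro card_mono) auto
    ultimately show ?thesis by linarith
  qed
  also have "\<dots> \<le> rank M X + rank M Y"
    using card_le_rank[OF M _ indep_subset[OF M J(3)], of "J \<inter> X" X]
      card_le_rank[OF M _ indep_subset[OF M J(3)], of "J \<inter> Y" Y] by simp
  finally show ?thesis unfolding I(3) J(4) .
qed

lemma rank_Un_le: "matroid M \<Longrightarrow> rank M (X \<union> Y) \<le> rank M X + rank M Y"
  using rank_submod[of M X Y] by linarith

subsection \<open>Minors\<close>

lemma ground_minor: "ground (minor M C D) = ground M - C - D"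
  by (simp add: minor_def deletion_def contraction_def ground_def)

lemma indep_minor:
  "indep (minor M C D) X \<longleftrightarrow> X \<subseteq> ground M - C - D \<and> rank M (X \<union> C) = card X + rank M C"
  by (auto simp add: minor_def deletion_def contraction_def indep_def ground_def)

lemma rank_minor:
  assumes M: "matroid M" and X: "X \<subseteq> ground M - C - D"
  shows "rank (minor M C D) X = rank M (X \<union> C) - rank M C"
proof -
  have fin_X: "finite X" using X finite_ground[OF M] finite_subset by blast
  obtain I where I: "I \<subseteq> C" "indep M I" "card I = rank M C"
    using obtain_rank_witness[OF M] .
  obtain J where J: "I \<subseteq> J" "J \<subseteq> X \<union> C" "indep M J" "card J = rank M (X \<union> C)"
    using extend_indep_to_rank[OF M I(2), of "X \<union> C"] I(1) by blast
  define Y where "Y = J - C"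
  have Y_sub: "Y \<subseteq> X" using J(2) Y_def by blast
  have fin: "finite J" "finite Y"
    using finite_indep[OF M J(3)] finite_subset[OF Y_sub fin_X] .
  have "card (J \<inter> C) = rank M C"
  proof (rule antisym)
    show "card (J \<inter> C) \<le> rank M C"
      by (rule card_le_rank[OF M _ indep_subset[OF M J(3)]]) auto
    show "rank M C \<le> card (J \<inter> C)"
      unfolding I(3)[symmetric] by (rule card_mono) (use fin I(1) J(1) in auto)
  qed
  moreover have "card J = card Y + card (J \<inter> C)"
  proof -
    have "Y \<union> (J \<inter> C) = J" unfolding Y_def by blast
    then have "card J = card (Y \<union> (J \<inter> C))" by simp
    also have "\<dots> = card Y + card (J \<inter> C)"
      by (rule card_Un_disjoint) (use fin in \<open>auto simp: Y_def\<close>)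
    finally show ?thesis .
  qed
  moreover have "card J \<le> rank M (Y \<union> C)"
    by (rule card_le_rank[OF M _ J(3)]) (auto simp: Y_def)
  moreover have "rank M (Y \<union> C) \<le> card Y + rank M C"
    using rank_Un_le[OF M, of Y C] rank_le_card[OF M fin(2)] by linarith
  ultimately have Y_rank: "rank M (Y \<union> C) = card Y + rank M C"
    and card_Y: "card Y = rank M (X \<union> C) - rank M C"
    using J(4) by linarith+
  have Y_indep: "indep (minor M C D) Y"
    unfolding indep_minor using Y_sub X Y_rank by blast
  have le_Y: "card Z \<le> card Y" if "Z \<subseteq> X" "indep (minor M C D) Z" for Z
  proof -
    have "rank M (Z \<union> C) = card Z + rank M C" using that(2) by (simp add: indep_minor)
    moreover have "rank M (Z \<union> C) \<le> rank M (X \<union> C)" using that(1) by (intro rank_mono[OF M]) blast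
    ultimately show ?thesis using card_Y by linarith
  qed
  have "finite {Z. Z \<subseteq> X \<and> indep (minor M C D) Z}"
    by (rule finite_subset[of _ "Pow X"]) (use fin_X in auto)
  then have "rank (minor M C D) X = card Y"
    unfolding rank_def[of "minor M C D"] using Y_indep Y_sub le_Y by (intro Max_eqI) auto
  with card_Y show ?thesis by simp
qed

text \<open>The connectivity of X in M/C\D expressed through the rank function of M (see
  \<open>conn_minor\<close>), integer-valued so that no truncated subtraction occurs.\<close>

definition minor_conn :: "'a matroid \<Rightarrow> 'a set \<Rightarrow> 'a set \<Rightarrow> 'a set \<Rightarrow> int" where
  "minor_conn M C D X =
     int (rank M (X \<union> C)) + int (rank M (ground M - D - X)) - int (rank M C) - int (rank M (ground M - D))"

lemma conn_minor:
  assumes M: "matroid M" and C: "C \<subseteq> ground M" and CD: "C \<inter> D = {}" and X: "X \<subseteq> ground M - C - D"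
  shows "int (conn (minor M C D) X) = minor_conn M C D X"
proof -
  let ?E = "ground M" and ?G = "ground M - C - D"
  have sets: "(?G - X) \<union> C = ?E - D - X" "?G \<union> C = ?E - D"
    "(X \<union> C) \<union> (?E - D - X) = ?E - D" "(X \<union> C) \<inter> (?E - D - X) = C"
    using C CD X by blast+
  have ranks: "rank (minor M C D) X = rank M (X \<union> C) - rank M C"
    "rank (minor M C D) (?G - X) = rank M (?E - D - X) - rank M C"
    "rank (minor M C D) ?G = rank M (?E - D) - rank M C"
    using rank_minor[OF M, of X C D] rank_minor[OF M, of "?G - X" C D] rank_minor[OF M, of ?G C D] X
    unfolding sets(1,2) by auto
  have "rank M C \<le> rank M (X \<union> C)" "rank M C \<le> rank M (?E - D - X)" "rank M C \<le> rank M (?E - D)"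
    using C CD X by (auto intro!: rank_mono[OF M])
  moreover have "rank M (?E - D) + rank M C \<le> rank M (X \<union> C) + rank M (?E - D - X)"
    using rank_submod[OF M, of "X \<union> C" "?E - D - X"] unfolding sets(3,4) .
  ultimately show ?thesis
    unfolding conn_def ground_minor ranks minor_conn_def by linarith
qed

lemma conn_eq_minor_conn:
  assumes M: "matroid M" and X: "X \<subseteq> ground M"
  shows "int (conn M X) = minor_conn M {} {} X"
proof -
  have "X \<union> (ground M - X) = ground M" "X \<inter> (ground M - X) = {}" using X by blast+
  then have "rank M (ground M) \<le> rank M X + rank M (ground M - X)"
    using rank_submod[OF M, of X "ground M - X"] rank_empty[OF M] by simp
  then show ?thesis unfolding minor_conn_def conn_def using rank_empty[OF M] by simp
qed

lemma minor_conn_contract_disjoint_le: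
  assumes M: "matroid M" and "Z \<inter> X = {}"
  shows "minor_conn M (C \<union> Z) D X \<le> minor_conn M C D X"
proof -
  have "(X \<union> C) \<union> (C \<union> Z) = X \<union> (C \<union> Z)" "(X \<union> C) \<inter> (C \<union> Z) = C" using assms by blast+
  then show ?thesis using rank_submod[OF M, of "X \<union> C" "C \<union> Z"] unfolding minor_conn_def by simp
qed

lemma minor_conn_contract_le_Un:
  assumes M: "matroid M" and "Z \<subseteq> ground M - D - X" and "C \<subseteq> ground M - D - X - Z"
  shows "minor_conn M (C \<union> Z) D X \<le> minor_conn M C D (X \<union> Z)"
proof -
  let ?A = "ground M - D - (X \<union> Z)"
  have "?A \<union> (C \<union> Z) = ground M - D - X" "?A \<inter> (C \<union> Z) = C" "X \<union> (C \<union> Z) = X \<union> Z \<union> C"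
    using assms by blast+
  then show ?thesis using rank_submod[OF M, of ?A "C \<union> Z"] unfolding minor_conn_def by simp
qed

lemma minor_conn_delete_disjoint_le:
  assumes M: "matroid M" and "Z \<inter> X = {}"
  shows "minor_conn M C (D \<union> Z) X \<le> minor_conn M C D X"
proof -
  let ?A = "ground M - D - X" and ?B = "ground M - (D \<union> Z)"
  have "?A \<union> ?B = ground M - D" "?A \<inter> ?B = ground M - (D \<union> Z) - X" using assms by blast+
  then show ?thesis using rank_submod[OF M, of ?A ?B] unfolding minor_conn_def by simp
qed

lemma minor_conn_delete_le_Un:
  assumes M: "matroid M" and "X \<union> C \<union> Z \<subseteq> ground M - D" and "(X \<union> C) \<inter> Z = {}"
  shows "minor_conn M C (D \<union> Z) X \<le> minor_conn M C D (X \<union> Z)"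
proof -
  let ?A = "X \<union> Z \<union> C" and ?B = "ground M - (D \<union> Z)"
  have "?A \<union> ?B = ground M - D" "?A \<inter> ?B = X \<union> C" "ground M - (D \<union> Z) - X = ground M - D - (X \<union> Z)"
    using assms by blast+
  then show ?thesis using rank_submod[OF M, of ?A ?B] unfolding minor_conn_def by simp
qed

lemma minor_conn_le_larger_minor:
  assumes M: "matroid M" and CD: "C \<union> D \<subseteq> ground M" "C \<inter> D = {}"
    and X: "X \<subseteq> ground M" "X \<inter> (C \<union> D) = {}"
    and sub: "C' \<subseteq> C" "D' \<subseteq> D" and Z: "Z \<subseteq> (C - C') \<union> (D - D')"
  shows "minor_conn M C D X \<le> minor_conn M C' D' (X \<union> Z)"
proof -
  define Zc Zd where "Zc = Z \<inter> C" and "Zd = Z \<inter> D"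
  have "C = (C' \<union> Zc) \<union> (C - C' - Z)" "D = (D' \<union> Zd) \<union> (D - D' - Z)" "X \<union> Zc \<union> Zd = X \<union> Z"
    using sub Z unfolding Zc_def Zd_def by blast+
  then have "minor_conn M C D X = minor_conn M ((C' \<union> Zc) \<union> (C - C' - Z)) D X" by simp
  also have "\<dots> \<le> minor_conn M (C' \<union> Zc) D X"
    by (rule minor_conn_contract_disjoint_le[OF M]) (use X in blast)
  also have "\<dots> \<le> minor_conn M C' D (X \<union> Zc)"
    by (rule minor_conn_contract_le_Un[OF M]) (use assms in \<open>auto simp: Zc_def\<close>)
  also have "\<dots> = minor_conn M C' ((D' \<union> Zd) \<union> (D - D' - Z)) (X \<union> Zc)"
    using \<open>D = _\<close> by simp
  also have "\<dots> \<le> minor_conn M C' (D' \<union> Zd) (X \<union> Zc)"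
    by (rule minor_conn_delete_disjoint_le[OF M]) (use X CD in \<open>auto simp: Zc_def\<close>)
  also have "\<dots> \<le> minor_conn M C' D' (X \<union> Zc \<union> Zd)"
    by (rule minor_conn_delete_le_Un[OF M]) (use assms in \<open>auto simp: Zc_def Zd_def\<close>)
  finally show ?thesis using \<open>X \<union> Zc \<union> Zd = X \<union> Z\<close> by simp
qed

subsection \<open>Skew sets\<close>

definition skew :: "'a matroid \<Rightarrow> 'a set \<Rightarrow> 'a set \<Rightarrow> bool" where
  "skew M X Y \<longleftrightarrow> rank M (X \<union> Y) = rank M X + rank M Y"

lemma skew_subset:
  assumes M: "matroid M" and "skew M P C" and "P \<inter> C = {}" and "X \<subseteq> P"
  shows "skew M X C"
proof -
  have "(X \<union> C) \<union> P = P \<union> C" "(X \<union> C) \<inter> P = X" using assms by blast+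
  then show ?thesis
    using rank_submod[OF M, of "X \<union> C" P] rank_Un_le[OF M, of X C] \<open>skew M P C\<close>
    unfolding skew_def by simp
qed

lemma skew_if_minor_conn_eq:
  assumes M: "matroid M" and "minor_conn M C {} X = minor_conn M {} {} X"
  shows "skew M X C"
  using assms(2) unfolding minor_conn_def skew_def by (simp add: rank_empty[OF M])

lemma skew_compl_if_minor_conn_eq:
  assumes M: "matroid M" and "C \<subseteq> ground M" "X \<inter> C = {}"
    and "minor_conn M C {} X = minor_conn M {} {} (X \<union> C)"
  shows "skew M (ground M - X - C) C"
proof -
  have "(ground M - X - C) \<union> C = ground M - X" "ground M - (X \<union> C) = ground M - X - C"
    using assms(2,3) by blast+
  with assms(4) show ?thesis
    unfolding minor_conn_def skew_def by (simp add: rank_empty[OF M] Un_commute)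
qed

lemma restriction_minor_eq_if_skew:
  assumes M: "matroid M" and P: "P \<subseteq> ground M - C - D" and "skew M P C"
  shows "restriction (minor M C D) P = restriction M P"
proof (rule prod_eqI)
  have ground_P: "ground (minor M C D) - (ground (minor M C D) - P) = P" "ground M - (ground M - P) = P"
    using P unfolding ground_minor by blast+
  then show "fst (restriction (minor M C D) P) = fst (restriction M P)"
    unfolding restriction_def deletion_def fst_conv by simp
  have "indep (minor M C D) X \<longleftrightarrow> indep M X" if "X \<subseteq> P" for X
  proof -
    have fin: "finite X" by (rule finite_subset[OF _ finite_ground[OF M]]) (use that P in blast)
    have "skew M X C" using skew_subset[OF M \<open>skew M P C\<close> _ that] P by blast
    then show ?thesis
      using that P unfolding indep_minor indep_iff_rank_eq_card[OF M fin] skew_def by auto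
  qed
  then show "snd (restriction (minor M C D) P) = snd (restriction M P)"
    unfolding restriction_def deletion_def snd_conv ground_P by (auto simp: indep_def)
qed

lemma minor_between_nested_separations:
  assumes M: "matroid M" and CD: "C \<union> D \<subseteq> ground M" "C \<inter> D = {}"
    and S: "S \<inter> (C \<union> D) = {}" "S \<subseteq> X" and XY: "X \<subseteq> Y" "Y \<subseteq> ground M" "Y - S \<subseteq> C \<union> D"
    and conn_S: "conn (minor M C D) S = conn M X" and conn_Y: "conn M Y = conn M X"
  defines "C' \<equiv> C \<inter> (Y - X)" and "D' \<equiv> D \<inter> (Y - X)"
  shows "conn (minor M C' D') X = conn M X" and "skew M X C'" and "skew M (ground M - Y) C'"
proof -
  note le = minor_conn_le_larger_minor[OF M]
  have X: "X \<subseteq> ground M" using XY by blast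
  have "S \<subseteq> ground M - C - D" using S XY by blast
  then have "int (conn M X) = minor_conn M C D S"
    using conn_minor[OF M, of C D S] conn_S CD by auto
  also have "\<dots> \<le> minor_conn M C' D' (S \<union> (X - S))"
    by (rule le) (use assms in auto)
  finally have lower: "int (conn M X) \<le> minor_conn M C' D' X"
    using S(2) by (simp add: Un_absorb1)
  have "minor_conn M C' D' X \<le> minor_conn M C' {} (X \<union> {})"
    and "minor_conn M C' {} X \<le> minor_conn M {} {} (X \<union> {})"
    and "minor_conn M C' D' X \<le> minor_conn M C' {} (X \<union> D')"
    and "minor_conn M C' {} (X \<union> D') \<le> minor_conn M {} {} (X \<union> D' \<union> C')"
    by (rule le; use assms in \<open>auto simp: C'_def D'_def\<close>)+
  moreover have "X \<union> D' \<union> C' = Y" using XY S CD unfolding C'_def D'_def by blast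
  moreover have "int (conn M X) = minor_conn M {} {} X" "int (conn M X) = minor_conn M {} {} Y"
    using conn_eq_minor_conn[OF M] conn_Y X XY(2) by metis+
  ultimately have "minor_conn M C' {} X = minor_conn M {} {} X"
    and "minor_conn M C' {} (X \<union> D') = minor_conn M {} {} (X \<union> D' \<union> C')"
    and "minor_conn M C' D' X = int (conn M X)"
    using lower by simp_all
  have minor_setup: "C' \<subseteq> ground M" "C' \<inter> D' = {}" "X \<subseteq> ground M - C' - D'"
    using X CD unfolding C'_def D'_def by blast+
  show "conn (minor M C' D') X = conn M X"
    using conn_minor[OF M minor_setup] \<open>minor_conn M C' D' X = _\<close> by simp
  show "skew M X C'" by (rule skew_if_minor_conn_eq[OF M]) fact
  have "ground M - (X \<union> D') - C' = ground M - Y" using \<open>X \<union> D' \<union> C' = Y\<close> by blast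
  then show "skew M (ground M - Y) C'"
    using skew_compl_if_minor_conn_eq[OF M _ _ \<open>minor_conn M C' {} (X \<union> D') = _\<close>] CD
    unfolding C'_def D'_def by auto
qed

theorem lemma3p7:
  fixes M :: "'a matroid" and S T C D :: "'a set" and A :: "nat \<Rightarrow> 'a set"
    and t i j k :: nat
  assumes "matroid M"
    and "S \<subseteq> ground M" and "T \<subseteq> ground M" and "S \<inter> T = {}"
    and "k = kappa M S T"
    and "\<forall>p q. 1 \<le> p \<and> p \<le> q \<and> q \<le> t \<longrightarrow> A p \<subseteq> A q"
    and "\<forall>p\<in>{1..t}. S \<subseteq> A p \<and> A p \<subseteq> ground M - T \<and> conn M (A p) = k"
    and "C \<union> D = ground M - (S \<union> T)" and "C \<inter> D = {}"
    and "indep M C" and "coindep M D"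
    and "conn (minor M C D) S = k"
    and "1 \<le> i" and "i < j" and "j \<le> t"
  shows "let Bj = ground M - A j;
             C' = C \<inter> (A j - A i);
             D' = D \<inter> (A j - A i);
             M' = minor M C' D'
         in A i \<union> Bj = ground M' \<and> A i \<inter> Bj = {} \<and>
            S \<subseteq> A i \<and> T \<subseteq> Bj \<and> conn M' (A i) = k \<and>
            restriction M' (A i) = restriction M (A i) \<and>
            restriction M' Bj = restriction M Bj"
proof -
  let ?C' = "C \<inter> (A j - A i)" and ?D' = "D \<inter> (A j - A i)"
  have nested: "A i \<subseteq> A j" using assms(6,13,14,15) by simp
  have Ai: "S \<subseteq> A i" "A i \<subseteq> ground M - T" "conn M (A i) = k" using assms(7,13,14,15) by auto
  have Aj: "A j \<subseteq> ground M - T" "conn M (A j) = k" using assms(7,13,14,15) by auto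
  note squeeze = minor_between_nested_separations[OF assms(1), of C D S "A i" "A j"]
  have CD_setup: "C \<union> D \<subseteq> ground M" "S \<inter> (C \<union> D) = {}" "A j - S \<subseteq> C \<union> D" "A j \<subseteq> ground M"
    using assms(8) Aj(1) by blast+
  have conn: "conn (minor M ?C' ?D') (A i) = k"
    and skew_A: "skew M (A i) ?C'" and skew_B: "skew M (ground M - A j) ?C'"
    using squeeze assms(9,12) CD_setup Ai Aj nested by auto
  have "restriction (minor M ?C' ?D') (A i) = restriction M (A i)"
    by (rule restriction_minor_eq_if_skew[OF assms(1) _ skew_A]) (use Ai in blast)
  moreover have "restriction (minor M ?C' ?D') (ground M - A j) = restriction M (ground M - A j)"
    by (rule restriction_minor_eq_if_skew[OF assms(1) _ skew_B]) blast
  moreover have "A i \<union> (ground M - A j) = ground (minor M ?C' ?D')"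
    unfolding ground_minor using Ai nested CD_setup by blast
  ultimately show ?thesis
    unfolding Let_def using conn Ai(1) Aj(1) assms(3) nested by (intro conjI) blast+
qed

end
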